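(* Let $\mu<\lambda$ be infinite cardinals with $\mu^{<\mu}=\mu$ and $\lambda$ regular. If $p,q\in\mathbb P(\lambda,\mu)$ coincide on $[\operatorname{dom}p\cap\operatorname{dom}q]^2$, then $p$ and $q$ are compatible in $\mathbb P(\lambda,\mu)$, i.e. there is $s\in\mathbb P(\lambda,\mu)$ with $p\cup q\subseteq s$.
   Context: Let $3$ denote the three-element set of symbols $\{\ge,\perp,u\}$. For a set $w$ of ordinals, $[w]^2=\{(i,j): i<j,\ i,j\in w\}$. A valuation function is a map $p:[w]^2\to 3$ (with domain $w$, written $\operatorname{dom}p$) such that: (1) if $i<j<k$ in $w$, $p(i,j)={\ge}$ and $p(j,k)={\ge}$, then $p(i,k)={\ge}$; (2) if $i<j<k$ in $w$ and $\{p(i,j),p(i,k)\}=\{\perp,\ge\}$ then $p(j,k)={\perp}$; and if $i<j<k$, $p(i,j)={\perp}$, $p(j,k)={\ge}$, then $p(i,k)={\perp}$. $\mathbb P(\lambda,\mu)$ is the set of valuation functions whose domain is a subset of $\lambda$ of cardinality less than $\mu$, ordered by reverse inclusion (so $s$ is stronger than $p$ iff $s\supseteq p$). *)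

theory Defs
  imports Main
begin

unbundle cardinal_syntax

datatype sym3 = Ge | Perp | U

(* Cardinals are represented by card-orders (initial well-orders); the
   ordinals below lambda are the elements of Field lam, ordered strictly by lam. *)
definition olt :: "'a rel \<Rightarrow> 'a \<Rightarrow> 'a \<Rightarrow> bool" where
  "olt lam i j \<longleftrightarrow> (i, j) \<in> lam \<and> i \<noteq> j"

definition pairs2 :: "'a rel \<Rightarrow> 'a set \<Rightarrow> ('a \<times> 'a) set" where
  "pairs2 lam w = {(i, j). i \<in> w \<and> j \<in> w \<and> olt lam i j}"

definition valuation :: "'a rel \<Rightarrow> 'a set \<Rightarrow> ('a \<times> 'a \<Rightarrow> sym3 option) \<Rightarrow> bool" where
  "valuation lam w f \<longleftrightarrow> dom f = pairs2 lam w \<and>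
     (\<forall>i\<in>w. \<forall>j\<in>w. \<forall>k\<in>w. olt lam i j \<longrightarrow> olt lam j k \<longrightarrow>
        (f (i, j) = Some Ge \<and> f (j, k) = Some Ge \<longrightarrow> f (i, k) = Some Ge) \<and>
        ({f (i, j), f (i, k)} = {Some Perp, Some Ge} \<longrightarrow> f (j, k) = Some Perp) \<and>
        (f (i, j) = Some Perp \<and> f (j, k) = Some Ge \<longrightarrow> f (i, k) = Some Perp))"

definition PP :: "'a rel \<Rightarrow> 'b rel \<Rightarrow> ('a set \<times> ('a \<times> 'a \<Rightarrow> sym3 option)) set" where
  "PP lam mu = {(w, f). w \<subseteq> Field lam \<and> |w| <o mu \<and> valuation lam w f}"

(* the set  U_{kappa < mu} mu^kappa  (functions from small subsets of mu into mu);
   its cardinality is mu^{<mu} *)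
definition small_funcs :: "'b rel \<Rightarrow> ('b set \<times> ('b \<Rightarrow> 'b)) set" where
  "small_funcs mu = {(K, g). K \<subseteq> Field mu \<and> |K| <o mu \<and> g \<in> Func K (Field mu)}"

end

theory Submission
  imports Defs
begin

(* Read p (x, y) = Ge as "y extends x" and Perp as a symmetric incompatibility relation.
   Then a valuation is just a transitive extension relation together with an incompatibility
   relation that passes to extensions: the three Perp-clauses of the definition are this one
   property for the three possible positions of the third index.

   To amalgamate p and q, with domains A and B, let y extend x if it does so in p or in q,
   possibly through one point of A \<inter> B, and let x, y be incompatible if they are so in p or
   in q, or if one of them extends a point of A \<inter> B that is incompatible with the other; all
   other pairs get U. One intermediate point suffices because a triple with two points in
   A \<inter> B lies inside A or inside B, where p and q are valuations. The amalgam has domain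
   A \<union> B, which is small because mu is infinite. *)

lemma olt_irrefl [simp]: "\<not> olt lam x x"
  unfolding olt_def by simp

lemma olt_trans:
  assumes "trans lam" "antisym lam" "olt lam x y" "olt lam y z"
  shows "olt lam x z"
  using assms unfolding olt_def by (metis antisymD transD)

lemma olt_asym: "antisym lam \<Longrightarrow> olt lam x y \<Longrightarrow> \<not> olt lam y x"
  unfolding olt_def by (metis antisymD)

lemma olt_total:
  "total_on w lam \<Longrightarrow> x \<in> w \<Longrightarrow> y \<in> w \<Longrightarrow> x \<noteq> y \<Longrightarrow> olt lam x y \<or> olt lam y x"
  unfolding olt_def total_on_def by blast

lemma in_pairs2_iff [simp]: "(x, y) \<in> pairs2 lam w \<longleftrightarrow> x \<in> w \<and> y \<in> w \<and> olt lam x y"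
  unfolding pairs2_def by simp

lemma dom_pairs2_SomeD:
  "dom f = pairs2 lam w \<Longrightarrow> f (x, y) = Some v \<Longrightarrow> x \<in> w \<and> y \<in> w \<and> olt lam x y"
  by (metis domI in_pairs2_iff)

definition ge_rel :: "('a \<times> 'a \<Rightarrow> sym3 option) \<Rightarrow> 'a \<Rightarrow> 'a \<Rightarrow> bool" where
  "ge_rel f x y \<longleftrightarrow> f (x, y) = Some Ge"

definition perp_rel :: "('a \<times> 'a \<Rightarrow> sym3 option) \<Rightarrow> 'a \<Rightarrow> 'a \<Rightarrow> bool" where
  "perp_rel f x y \<longleftrightarrow> f (x, y) = Some Perp \<or> f (y, x) = Some Perp"

lemma perp_rel_ordered:
  assumes "antisym lam" "dom f = pairs2 lam w" "olt lam x y"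
  shows "perp_rel f x y \<longleftrightarrow> f (x, y) = Some Perp"
proof -
  have "f (y, x) \<noteq> Some Perp"
    using dom_pairs2_SomeD[OF assms(2)] olt_asym[OF assms(1,3)] by metis
  then show ?thesis unfolding perp_rel_def by blast
qed

lemma perp_rel_irrefl: "dom f = pairs2 lam w \<Longrightarrow> \<not> perp_rel f x x"
  unfolding perp_rel_def by (metis dom_pairs2_SomeD olt_irrefl)

lemma valuation_ge_rel_trans:
  assumes "valuation lam w f" "x \<in> w" "y \<in> w" "z \<in> w" "ge_rel f x y" "ge_rel f y z"
  shows "ge_rel f x z"
proof -
  have "dom f = pairs2 lam w" using assms(1) unfolding valuation_def by blast
  then have "olt lam x y" "olt lam y z"
    using assms(5,6) dom_pairs2_SomeD unfolding ge_rel_def by metis+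
  moreover have "f (i, k) = Some Ge"
    if "i \<in> w" "j \<in> w" "k \<in> w" "olt lam i j" "olt lam j k"
      "f (i, j) = Some Ge" "f (j, k) = Some Ge" for i j k
    using assms(1) that unfolding valuation_def by blast
  ultimately show ?thesis using assms(2-6) unfolding ge_rel_def by simp
qed

lemma valuation_perp_rel_down:
  assumes lam: "trans lam" "antisym lam" "total_on w lam" and val: "valuation lam w f"
    and xyz: "x \<in> w" "y \<in> w" "z \<in> w" and xy: "ge_rel f x y" and xz: "perp_rel f x z"
  shows "perp_rel f y z"
proof -
  have dom: "dom f = pairs2 lam w" using val unfolding valuation_def by blast
  have ax2: "f (j, k) = Some Perp"
    if "i \<in> w" "j \<in> w" "k \<in> w" "olt lam i j" "olt lam j k"
      "{f (i, j), f (i, k)} = {Some Perp, Some Ge}" for i j k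
    using val that unfolding valuation_def by blast
  have ax3: "f (i, k) = Some Perp"
    if "i \<in> w" "j \<in> w" "k \<in> w" "olt lam i j" "olt lam j k"
      "f (i, j) = Some Perp" "f (j, k) = Some Ge" for i j k
    using val that unfolding valuation_def by blast
  have x_y: "olt lam x y" "f (x, y) = Some Ge"
    using dom_pairs2_SomeD[OF dom] xy unfolding ge_rel_def by blast+
  have "z \<noteq> x" using xz perp_rel_irrefl[OF dom] by blast
  moreover have "z \<noteq> y" using xz x_y perp_rel_ordered[OF lam(2) dom] by auto
  ultimately consider "olt lam y z" | "olt lam x z" "olt lam z y" | "olt lam z x"
    using olt_total[OF lam(3)] xyz x_y by blast
  then show ?thesis
  proof cases
    case 1
    then have "f (x, z) = Some Perp"
      using xz perp_rel_ordered[OF lam(2) dom] olt_trans[OF lam(1,2) x_y(1)] by blast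
    then show ?thesis
      using ax2[of x y z] xyz x_y 1 unfolding perp_rel_def by (simp add: insert_commute)
  next
    case 2
    then have "f (x, z) = Some Perp" using xz perp_rel_ordered[OF lam(2) dom] by blast
    then show ?thesis
      using ax2[of x z y] xyz x_y 2 unfolding perp_rel_def by simp
  next
    case 3
    then have "f (z, x) = Some Perp"
      using xz perp_rel_ordered[OF lam(2) dom] perp_rel_def by metis
    then show ?thesis
      using ax3[of z x y] xyz x_y 3 unfolding perp_rel_def by simp
  qed
qed

lemma valuationI_relations:
  assumes lam: "trans lam" "antisym lam" and dom: "dom f = pairs2 lam w"
    and trans: "\<And>x y z. x \<in> w \<Longrightarrow> y \<in> w \<Longrightarrow> z \<in> w \<Longrightarrow>
      ge_rel f x y \<Longrightarrow> ge_rel f y z \<Longrightarrow> ge_rel f x z"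
    and down: "\<And>x y z. x \<in> w \<Longrightarrow> y \<in> w \<Longrightarrow> z \<in> w \<Longrightarrow>
      ge_rel f x y \<Longrightarrow> perp_rel f x z \<Longrightarrow> perp_rel f y z"
  shows "valuation lam w f"
proof -
  have "(f (i, j) = Some Ge \<and> f (j, k) = Some Ge \<longrightarrow> f (i, k) = Some Ge) \<and>
      ({f (i, j), f (i, k)} = {Some Perp, Some Ge} \<longrightarrow> f (j, k) = Some Perp) \<and>
      (f (i, j) = Some Perp \<and> f (j, k) = Some Ge \<longrightarrow> f (i, k) = Some Perp)"
    if ijk: "i \<in> w" "j \<in> w" "k \<in> w" "olt lam i j" "olt lam j k" for i j k
  proof -
    have ik: "olt lam i k" using olt_trans[OF lam] ijk by blast
    have ge: "ge_rel f a b" if "f (a, b) = Some Ge" for a b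
      using that unfolding ge_rel_def .
    have perp: "perp_rel f a b" "perp_rel f b a" if "f (a, b) = Some Perp" for a b
      using that unfolding perp_rel_def by simp_all
    have "f (i, k) = Some Ge" if "f (i, j) = Some Ge" "f (j, k) = Some Ge"
      using trans[OF ijk(1-3) ge[OF that(1)] ge[OF that(2)]] unfolding ge_rel_def .
    moreover have "f (j, k) = Some Perp" if "f (i, j) = Some Ge" "f (i, k) = Some Perp"
      using down[OF ijk(1-3) ge[OF that(1)] perp(1)[OF that(2)]]
        perp_rel_ordered[OF lam(2) dom ijk(5)] by blast
    moreover have "f (j, k) = Some Perp" if "f (i, j) = Some Perp" "f (i, k) = Some Ge"
      using down[OF ijk(1,3,2) ge[OF that(2)] perp(1)[OF that(1)]]
        perp_rel_ordered[OF lam(2) dom ijk(5)] unfolding perp_rel_def by blast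
    moreover have "f (i, k) = Some Perp" if "f (i, j) = Some Perp" "f (j, k) = Some Ge"
      using down[OF ijk(2,3,1) ge[OF that(2)] perp(2)[OF that(1)]]
        perp_rel_ordered[OF lam(2) dom ik] unfolding perp_rel_def by blast
    ultimately show ?thesis by (auto simp: doubleton_eq_iff)
  qed
  with dom show ?thesis unfolding valuation_def by blast
qed

definition valuation_of ::
    "'a rel \<Rightarrow> 'a set \<Rightarrow> ('a \<Rightarrow> 'a \<Rightarrow> bool) \<Rightarrow> ('a \<Rightarrow> 'a \<Rightarrow> bool) \<Rightarrow> 'a \<times> 'a \<Rightarrow> sym3 option" where
  "valuation_of lam w E P = (\<lambda>(x, y). if (x, y) \<in> pairs2 lam w
     then Some (if E x y then Ge else if P x y then Perp else U) else None)"

lemma valuation_valuation_of: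
  assumes lam: "trans lam" "antisym lam" "total_on w lam"
    and E_trans: "\<And>x y z. x \<in> w \<Longrightarrow> y \<in> w \<Longrightarrow> z \<in> w \<Longrightarrow> E x y \<Longrightarrow> E y z \<Longrightarrow> E x z"
    and P_sym: "\<And>x y. P x y \<Longrightarrow> P y x"
    and P_irrefl: "\<And>x. \<not> P x x"
    and P_down: "\<And>x y z. x \<in> w \<Longrightarrow> y \<in> w \<Longrightarrow> z \<in> w \<Longrightarrow> E x y \<Longrightarrow> P x z \<Longrightarrow> P y z"
  shows "valuation lam w (valuation_of lam w E P)"
proof -
  define f where "f = valuation_of lam w E P"
  have ge_iff: "ge_rel f x y \<longleftrightarrow> (x, y) \<in> pairs2 lam w \<and> E x y" for x y
    unfolding f_def valuation_of_def ge_rel_def by auto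
  have perp_iff: "perp_rel f x y \<longleftrightarrow> x \<noteq> y \<and> P x y" if "x \<in> w" "y \<in> w" for x y
  proof -
    have "\<not> E x y" "\<not> E y x" if "P x y"
      using P_down P_sym P_irrefl \<open>x \<in> w\<close> \<open>y \<in> w\<close> that by blast+
    moreover have "olt lam x y \<or> olt lam y x" if "x \<noteq> y"
      using olt_total[OF lam(3)] \<open>x \<in> w\<close> \<open>y \<in> w\<close> that by blast
    ultimately show ?thesis
      using that P_sym P_irrefl unfolding f_def valuation_of_def perp_rel_def by auto
  qed
  have "dom f = pairs2 lam w"
    unfolding f_def valuation_of_def by (auto split: if_splits)
  then show ?thesis
    unfolding f_def[symmetric]
  proof (rule valuationI_relations[OF lam(1,2)])
    show "ge_rel f x z" if "x \<in> w" "y \<in> w" "z \<in> w" "ge_rel f x y" "ge_rel f y z" for x y z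
      using that E_trans[of x y z] olt_trans[OF lam(1,2), of x y z] unfolding ge_iff by simp
    show "perp_rel f y z" if "x \<in> w" "y \<in> w" "z \<in> w" "ge_rel f x y" "perp_rel f x z" for x y z
      using that P_down[of x y z] P_irrefl
      unfolding ge_iff perp_iff[OF that(1,3)] perp_iff[OF that(2,3)] by blast
  qed
qed

lemma map_le_valuation_of:
  assumes "antisym lam" "dom f \<subseteq> pairs2 lam w"
    and "\<And>x y. (x, y) \<in> dom f \<Longrightarrow> E x y \<longleftrightarrow> ge_rel f x y"
    and "\<And>x y. (x, y) \<in> dom f \<Longrightarrow> P x y \<longleftrightarrow> perp_rel f x y"
  shows "f \<subseteq>\<^sub>m valuation_of lam w E P"
  unfolding map_le_def
proof (intro ballI)
  fix a assume a: "a \<in> dom f"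
  obtain x y v where xy: "a = (x, y)" "f (x, y) = Some v"
    using a by (cases a) auto
  then have "(x, y) \<in> pairs2 lam w" using a assms(2) by blast
  moreover have "f (y, x) = None"
    using calculation assms(2) olt_asym[OF assms(1)] by auto
  ultimately show "f a = valuation_of lam w E P a"
    using assms(3,4)[of x y] a xy unfolding valuation_of_def ge_rel_def perp_rel_def
    by (cases v) auto
qed

locale amalgamation =
  fixes A B :: "'a set" and E P :: "'a \<Rightarrow> 'a \<Rightarrow> bool"
  assumes E_piece: "E x y \<Longrightarrow> {x, y} \<subseteq> A \<or> {x, y} \<subseteq> B"
    and P_piece: "P x y \<Longrightarrow> {x, y} \<subseteq> A \<or> {x, y} \<subseteq> B"
    and P_sym: "P x y \<Longrightarrow> P y x"
    and P_irrefl: "\<not> P x x"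
    and E_trans: "E x y \<Longrightarrow> E y z \<Longrightarrow> {x, y, z} \<subseteq> A \<or> {x, y, z} \<subseteq> B \<Longrightarrow> E x z"
    and P_down: "E x y \<Longrightarrow> P x z \<Longrightarrow> {x, y, z} \<subseteq> A \<or> {x, y, z} \<subseteq> B \<Longrightarrow> P y z"
begin

definition E_amalg :: "'a \<Rightarrow> 'a \<Rightarrow> bool" where
  "E_amalg x y \<longleftrightarrow> E x y \<or> (\<exists>d \<in> A \<inter> B. E x d \<and> E d y)"

definition P_amalg :: "'a \<Rightarrow> 'a \<Rightarrow> bool" where
  "P_amalg x y \<longleftrightarrow> P x y \<or> (\<exists>d \<in> A \<inter> B. E d x \<and> P d y \<or> E d y \<and> P d x)"

lemma E_amalg_trans:
  assumes "E_amalg x y" "E_amalg y z"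
  shows "E_amalg x z"
proof -
  have E_common: "E x z" if "E x y" "E y z" "x \<in> A \<inter> B \<or> z \<in> A \<inter> B" for x y z
    using E_piece[OF that(1)] E_piece[OF that(2)] E_trans[OF that(1,2)] that(3) by blast
  have E_step: "E_amalg x z" if "E x y" "E y z" for x y z
  proof (cases "y \<in> A \<inter> B")
    case True
    then show ?thesis using that unfolding E_amalg_def by blast
  next
    case False
    then have "{x, y, z} \<subseteq> A \<or> {x, y, z} \<subseteq> B"
      using E_piece[OF that(1)] E_piece[OF that(2)] by blast
    then show ?thesis using that E_trans unfolding E_amalg_def by blast
  qed
  have E_left: "E_amalg x z" if "E x y" "E_amalg y z" for x y z
    using \<open>E_amalg y z\<close> unfolding E_amalg_def[of y z]
  proof (elim disjE bexE conjE)
    fix e assume "e \<in> A \<inter> B" "E y e" "E e z"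
    then show ?thesis using that E_common[of x y e] E_step by blast
  qed (use that E_step in blast)
  from \<open>E_amalg x y\<close> show ?thesis unfolding E_amalg_def[of x y]
  proof (elim disjE bexE conjE)
    fix d assume "d \<in> A \<inter> B" "E x d" "E d y"
    then show ?thesis using assms(2) E_left[of d y z] E_left[of x d z] by blast
  qed (use assms(2) E_left in blast)
qed

lemma P_amalg_sym: "P_amalg x y \<Longrightarrow> P_amalg y x"
  unfolding P_amalg_def using P_sym by blast

lemma P_amalg_irrefl: "\<not> P_amalg x x"
proof
  assume "P_amalg x x"
  then obtain d where "E d x" "P d x"
    using P_irrefl unfolding P_amalg_def by blast
  then show False
    using P_down[of d x x] P_piece P_irrefl by blast
qed

lemma P_amalg_down_step:
  assumes "E x y" "P_amalg x z"
  shows "P_amalg y z"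
  using \<open>P_amalg x z\<close> unfolding P_amalg_def[of x z]
proof (elim disjE bexE conjE)
  assume "P x z"
  show ?thesis
  proof (cases "x \<in> A \<inter> B")
    case True
    then show ?thesis using assms(1) \<open>P x z\<close> unfolding P_amalg_def by blast
  next
    case False
    then have "{x, y, z} \<subseteq> A \<or> {x, y, z} \<subseteq> B"
      using E_piece[OF assms(1)] P_piece[OF \<open>P x z\<close>] by blast
    then show ?thesis using P_down assms(1) \<open>P x z\<close> unfolding P_amalg_def by blast
  qed
next
  fix d assume d: "d \<in> A \<inter> B" "E d x" "P d z"
  then have "E d y" using E_trans[OF d(2) assms(1)] E_piece[OF assms(1)] by blast
  then show ?thesis using d unfolding P_amalg_def by blast
next
  fix d assume d: "d \<in> A \<inter> B" "E d z" "P d x"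
  then have "P y d" using P_down[OF assms(1) P_sym[OF d(3)]] E_piece[OF assms(1)] by blast
  then show ?thesis using d P_sym unfolding P_amalg_def by blast
qed

lemma P_amalg_down: "E_amalg x y \<Longrightarrow> P_amalg x z \<Longrightarrow> P_amalg y z"
  unfolding E_amalg_def using P_amalg_down_step by blast

lemma E_amalg_piece_iff:
  assumes "{x, y} \<subseteq> A \<or> {x, y} \<subseteq> B"
  shows "E_amalg x y \<longleftrightarrow> E x y"
  using assms E_trans[of x _ y] unfolding E_amalg_def by blast

lemma P_amalg_piece_iff:
  assumes "{x, y} \<subseteq> A \<or> {x, y} \<subseteq> B"
  shows "P_amalg x y \<longleftrightarrow> P x y"
  using assms P_down[of _ x y] P_down[of _ y x] P_sym[of y x] unfolding P_amalg_def by blast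

end

lemma map_add_pairs2_left:
  assumes "dom p = pairs2 lam A" "dom q = pairs2 lam B" "x \<in> A" "y \<in> A"
  shows "(q ++ p) (x, y) = p (x, y)"
proof -
  have "(x, y) \<in> dom q \<Longrightarrow> (x, y) \<in> dom p" using assms by simp
  then show ?thesis by (auto simp: map_add_def split: option.split)
qed

lemma map_add_pairs2_right:
  assumes "dom p = pairs2 lam A" "dom q = pairs2 lam B"
    and "\<forall>a \<in> pairs2 lam (A \<inter> B). p a = q a" "x \<in> B" "y \<in> B"
  shows "(q ++ p) (x, y) = q (x, y)"
proof -
  have "p (x, y) = q (x, y)" if "(x, y) \<in> dom p"
    using assms that by (simp add: pairs2_def)
  then show ?thesis by (cases "(x, y) \<in> dom p") (auto simp: map_add_def domIff)
qed

lemma amalgamation_of_valuations: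
  assumes lam: "trans lam" "antisym lam" "total_on (A \<union> B) lam"
    and p: "valuation lam A p" and q: "valuation lam B q"
    and agree: "\<forall>a \<in> pairs2 lam (A \<inter> B). p a = q a"
  shows "amalgamation A B (ge_rel (q ++ p)) (perp_rel (q ++ p))"
proof -
  let ?H = "q ++ p"
  have dom: "dom p = pairs2 lam A" "dom q = pairs2 lam B"
    using p q unfolding valuation_def by blast+
  have on_A: "ge_rel ?H x y = ge_rel p x y" "perp_rel ?H x y = perp_rel p x y"
    if "x \<in> A" "y \<in> A" for x y
    using map_add_pairs2_left[OF dom] that unfolding ge_rel_def perp_rel_def by simp_all
  have on_B: "ge_rel ?H x y = ge_rel q x y" "perp_rel ?H x y = perp_rel q x y"
    if "x \<in> B" "y \<in> B" for x y
    using map_add_pairs2_right[OF dom agree] that unfolding ge_rel_def perp_rel_def by simp_all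
  have defined: "{x, y} \<subseteq> A \<or> {x, y} \<subseteq> B" if "?H (x, y) = Some v" for x y v
    using that dom domI[of ?H "(x, y)"] by auto
  have total: "total_on A lam" "total_on B lam"
    using total_on_subset[OF lam(3)] by blast+
  show ?thesis
  proof
    fix x y z
    show "ge_rel ?H x y \<Longrightarrow> {x, y} \<subseteq> A \<or> {x, y} \<subseteq> B"
      unfolding ge_rel_def by (rule defined)
    show "perp_rel ?H x y \<Longrightarrow> {x, y} \<subseteq> A \<or> {x, y} \<subseteq> B"
      unfolding perp_rel_def using defined[of x y] defined[of y x] insert_commute[of x y "{}"]
      by metis
    show "perp_rel ?H x y \<Longrightarrow> perp_rel ?H y x"
      unfolding perp_rel_def by blast
    have "(x, x) \<notin> dom ?H" using dom by simp
    then show "\<not> perp_rel ?H x x"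
      unfolding perp_rel_def by (auto simp del: dom_map_add)
    show "ge_rel ?H x z"
      if "ge_rel ?H x y" "ge_rel ?H y z" "{x, y, z} \<subseteq> A \<or> {x, y, z} \<subseteq> B"
      using that(3)
    proof
      assume "{x, y, z} \<subseteq> A"
      then show ?thesis using that(1,2) valuation_ge_rel_trans[OF p, of x y z] on_A by simp
    next
      assume "{x, y, z} \<subseteq> B"
      then show ?thesis using that(1,2) valuation_ge_rel_trans[OF q, of x y z] on_B by simp
    qed
    show "perp_rel ?H y z"
      if "ge_rel ?H x y" "perp_rel ?H x z" "{x, y, z} \<subseteq> A \<or> {x, y, z} \<subseteq> B"
      using that(3)
    proof
      assume "{x, y, z} \<subseteq> A"
      then show ?thesis
        using that(1,2) valuation_perp_rel_down[OF lam(1,2) total(1) p, of x y z] on_A by simp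
    next
      assume "{x, y, z} \<subseteq> B"
      then show ?thesis
        using that(1,2) valuation_perp_rel_down[OF lam(1,2) total(2) q, of x y z] on_B by simp
    qed
  qed
qed

lemma valuations_amalgamate:
  assumes lam: "trans lam" "antisym lam" "total_on (A \<union> B) lam"
    and p: "valuation lam A p" and q: "valuation lam B q"
    and agree: "\<forall>a \<in> pairs2 lam (A \<inter> B). p a = q a"
  shows "\<exists>f. valuation lam (A \<union> B) f \<and> p \<subseteq>\<^sub>m f \<and> q \<subseteq>\<^sub>m f"
proof -
  let ?H = "q ++ p"
  interpret amalgamation A B "ge_rel ?H" "perp_rel ?H"
    using amalgamation_of_valuations[OF assms] .
  let ?f = "valuation_of lam (A \<union> B) E_amalg P_amalg"
  have "valuation lam (A \<union> B) ?f"
    by (rule valuation_valuation_of[OF lam])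
      (use E_amalg_trans P_amalg_sym P_amalg_irrefl P_amalg_down in blast)+
  moreover have dom: "dom p = pairs2 lam A" "dom q = pairs2 lam B"
    using p q unfolding valuation_def by blast+
  have "?H \<subseteq>\<^sub>m ?f"
  proof (rule map_le_valuation_of[OF lam(2)])
    show "dom ?H \<subseteq> pairs2 lam (A \<union> B)" using dom by auto
    fix x y assume "(x, y) \<in> dom ?H"
    then have "{x, y} \<subseteq> A \<or> {x, y} \<subseteq> B" using dom by auto
    then show "E_amalg x y \<longleftrightarrow> ge_rel ?H x y" "P_amalg x y \<longleftrightarrow> perp_rel ?H x y"
      using E_amalg_piece_iff P_amalg_piece_iff by blast+
  qed
  moreover have "q \<subseteq>\<^sub>m ?H"
    using map_add_pairs2_right[OF dom agree] dom unfolding map_le_def by auto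
  ultimately show ?thesis
    using map_le_map_add map_le_trans by blast
qed

theorem proposition4p4:
  fixes lam :: "'a rel" and mu :: "'b rel"
    and p q :: "'a set \<times> ('a \<times> 'a \<Rightarrow> sym3 option)"
  assumes "Card_order lam" and "Card_order mu"
    and "infinite (Field mu)" and "infinite (Field lam)"
    and "mu <o lam"
    and "|small_funcs mu| =o mu"
    and "regularCard lam"
    and "p \<in> PP lam mu" and "q \<in> PP lam mu"
    and "\<forall>x \<in> pairs2 lam (fst p \<inter> fst q). snd p x = snd q x"
  shows "\<exists>s \<in> PP lam mu. fst p \<union> fst q \<subseteq> fst s \<and>
           snd p \<subseteq>\<^sub>m snd s \<and> snd q \<subseteq>\<^sub>m snd s"
proof -
  obtain A f where p: "p = (A, f)" by fastforce
  obtain B g where q: "q = (B, g)" by fastforce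
  have A: "A \<subseteq> Field lam" "|A| <o mu" "valuation lam A f"
    using assms(8) unfolding p PP_def by auto
  have B: "B \<subseteq> Field lam" "|B| <o mu" "valuation lam B g"
    using assms(9) unfolding q PP_def by auto
  have "trans lam" "antisym lam" "total_on (Field lam) lam"
    using card_order_on_well_order_on[OF assms(1)]
    unfolding well_order_on_def linear_order_on_def partial_order_on_def preorder_on_def by blast+
  moreover have "total_on (A \<union> B) lam"
    using total_on_subset calculation(3) A(1) B(1) by blast
  moreover have "\<forall>a \<in> pairs2 lam (A \<inter> B). f a = g a"
    using assms(10) unfolding p q by simp
  ultimately obtain h where h: "valuation lam (A \<union> B) h" "f \<subseteq>\<^sub>m h" "g \<subseteq>\<^sub>m h"
    using valuations_amalgamate A(3) B(3) by blast
  have "|A \<union> B| <o mu"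
    using card_of_Un_ordLess_infinite_Field[OF assms(3,2) A(2) B(2)] .
  then have "(A \<union> B, h) \<in> PP lam mu"
    using A(1) B(1) h(1) unfolding PP_def by blast
  with h(2,3) show ?thesis
    unfolding p q by (intro bexI[of _ "(A \<union> B, h)"]) simp_all
qed

end
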